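(* Let $k$ be a field, $A=kQ_A/I_A$ a monomial algebra with vertices $e_1,\dots,e_n$, and $B$ the algebra obtained by gluing the distinct non-isolated vertices $e_1,e_n$. Then there is a decomposition of $k$-vector spaces $\mathrm{Ker}(\delta^0_{(B)_{\ge1}})=\psi_0(\mathrm{Ker}(\delta^0_{(A)_{\ge1}}))\oplus Z_{nsp}$. In particular, if $e_1,e_n$ lie in the same block, then $\dim_k\mathrm{Ker}(\delta^0_{(B)_{\ge1}})=\dim_k\mathrm{Ker}(\delta^0_{(A)_{\ge1}})+\mathrm{nsp}(1,n)$; if they lie in different blocks, then $\dim_k\mathrm{Ker}(\delta^0_{(B)_{\ge1}})=\dim_k\mathrm{Ker}(\delta^0_{(A)_{\ge1}})$.
   Context: Monomial algebra: $A=kQ_A/I_A$, $Q_A$ finite quiver, $I_A$ admissible, generated by a minimal set $Z_A$ of paths of length $\ge2$; $\mathcal B_A$: paths (including trivial ones) avoiding elements of $Z_A$ as subpaths; $(\mathcal B_A)_{\ge1}$ those of length $\ge1$. Gluing: $B\subseteq A$ generated by $f_1=e_1+e_n$, $f_i=e_i$ ($2\le i\le n-1$) and all arrows; $B\cong kQ_B/I_B$, $Q_B$ obtained by identifying $e_1,e_n$ to $f_1$ (arrow $\alpha\mapsto\alpha^*$, path $p=a_m\cdots a_1\mapsto p^*=a_m^*\cdots a_1^*$, $e_i^*=f_i$, $e_1^*=e_n^*=f_1$), $I_B$ generated by $\{r^*:r\in Z_A\}$ and the paths $b^*c^*$ with $b,c$ arrows, $t(c),s(b)\in\{e_1,e_n\}$,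 $t(c)\ne s(b)$; $\mathcal B_B$ its basis paths. Blocks correspond to connected components of $Q_A$. For path sets $X,Y$, $k(X\|Y)$ has basis the pairs $x\|y$ of parallel paths. For monomial $\Lambda=kQ/\langle Z\rangle$ with basis paths $\mathcal B$, $\delta^0:k(Q_0\|\mathcal B)\to k(Q_1\|\mathcal B)$, $e\|\gamma\mapsto\sum_{a\in Q_1,s(a)=e,a\gamma\in\mathcal B}a\|a\gamma-\sum_{a\in Q_1,t(a)=e,\gamma a\in\mathcal B}a\|\gamma a$; $\delta^0_{(A)_{\ge1}}$ is the restriction of $\delta^0_A$ to $k((Q_A)_0\|(\mathcal B_A)_{\ge1})$, similarly for $B$. $\psi_0:k((Q_A)_0\|\mathcal B_A)\to k((Q_B)_0\|\mathcal B_B)$, $e\|p\mapsto e^*\|p^*$. A non-special path is a path $p\in\mathcal B_A$ from $e_1$ to $e_n$ or from $e_n$ to $e_1$ such that $ap\in I_A$ and $pb\in I_A$ for all arrows $a,b$ (equivalently $\delta^0_B(f_1\|p^* )=0$); $\mathrm{nsp}(1,n)$ is their number, and $Z_{nsp}$ is the span of the elements $f_1\|p^*$ over non-special paths $p$. *)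

theory Defs
  imports Complex_Main "HOL-Library.Sublist" "HOL-Library.Function_Algebras"
begin

record ('v, 'a) quiver =
  verts :: "'v set"
  arrs  :: "'a set"
  src   :: "'a \<Rightarrow> 'v"
  tgt   :: "'a \<Rightarrow> 'v"

text \<open>A path is a start vertex together with the list of its arrows in the order
  in which they are traversed: the path a_m...a_1 (a_1 first) is (s(a_1), [a_1,...,a_m]);
  the trivial path e_v is (v, []).\<close>
type_synonym ('v, 'a) path = "'v \<times> 'a list"

definition path_end :: "('v, 'a) quiver \<Rightarrow> ('v, 'a) path \<Rightarrow> 'v" where
  "path_end Q p = (if snd p = [] then fst p else tgt Q (last (snd p)))"

fun arrow_chain :: "('v, 'a) quiver \<Rightarrow> 'v \<Rightarrow> 'a list \<Rightarrow> bool" where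
  "arrow_chain Q v [] = True"
| "arrow_chain Q v (a # as) = (a \<in> arrs Q \<and> src Q a = v \<and> arrow_chain Q (tgt Q a) as)"

definition is_path :: "('v, 'a) quiver \<Rightarrow> ('v, 'a) path \<Rightarrow> bool" where
  "is_path Q p \<longleftrightarrow> fst p \<in> verts Q \<and> arrow_chain Q (fst p) (snd p)"

definition path_len :: "('v, 'a) path \<Rightarrow> nat" where
  "path_len p = length (snd p)"

text \<open>post_arr a g is the product a g (first g, then a);
  pre_arr Q g a is the product g a (first a, then g).
  They are genuine paths exactly when composable.\<close>
definition post_arr :: "'a \<Rightarrow> ('v, 'a) path \<Rightarrow> ('v, 'a) path" where
  "post_arr a g = (fst g, snd g @ [a])"

definition pre_arr :: "('v, 'a) quiver \<Rightarrow> ('v, 'a) path \<Rightarrow> 'a \<Rightarrow> ('v, 'a) path" where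
  "pre_arr Q g a = (src Q a, a # snd g)"

definition non_isolated :: "('v, 'a) quiver \<Rightarrow> 'v \<Rightarrow> bool" where
  "non_isolated Q v \<longleftrightarrow> (\<exists>a\<in>arrs Q. src Q a = v \<or> tgt Q a = v)"

text \<open>Blocks of A = connected components of the (underlying graph of the) quiver.\<close>
definition same_block :: "('v, 'a) quiver \<Rightarrow> 'v \<Rightarrow> 'v \<Rightarrow> bool" where
  "same_block Q v w \<longleftrightarrow>
     (v, w) \<in> ({(src Q a, tgt Q a) | a. a \<in> arrs Q} \<union> {(tgt Q a, src Q a) | a. a \<in> arrs Q})\<^sup>*"

text \<open>A (genuine) path lies in the ideal generated by Z iff it contains an element of Z
  as a subpath.\<close>
definition contains_rel :: "('v, 'a) path set \<Rightarrow> ('v, 'a) path \<Rightarrow> bool" where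
  "contains_rel Z p \<longleftrightarrow> (\<exists>r\<in>Z. sublist (snd r) (snd p))"

text \<open>kQ/<Z> is a monomial algebra: Q a finite quiver, Z a minimal set of paths of
  length at least 2 generating an admissible ideal (all long paths lie in the ideal).\<close>
definition monomial_data :: "('v, 'a) quiver \<Rightarrow> ('v, 'a) path set \<Rightarrow> bool" where
  "monomial_data Q Z \<longleftrightarrow>
     finite (verts Q) \<and> finite (arrs Q) \<and>
     (\<forall>a\<in>arrs Q. src Q a \<in> verts Q \<and> tgt Q a \<in> verts Q) \<and>
     (\<forall>r\<in>Z. is_path Q r \<and> path_len r \<ge> 2) \<and>
     (\<forall>r\<in>Z. \<forall>r'\<in>Z. sublist (snd r) (snd r') \<longrightarrow> r = r') \<and>
     (\<exists>N. \<forall>p. is_path Q p \<and> path_len p \<ge> N \<longrightarrow> contains_rel Z p)"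

definition basis_paths :: "('v, 'a) quiver \<Rightarrow> ('v, 'a) path set \<Rightarrow> ('v, 'a) path set" where
  "basis_paths Q Z = {p. is_path Q p \<and> \<not> contains_rel Z p}"

text \<open>Elements of k(X || Y) are represented as k-valued functions on pairs, vanishing
  outside the set of parallel pairs.\<close>
definition VP :: "('v, 'a) quiver \<Rightarrow> ('v, 'a) path set \<Rightarrow> ('v \<times> ('v, 'a) path) set" where
  "VP Q Bs = {(e, g). e \<in> verts Q \<and> g \<in> Bs \<and> fst g = e \<and> path_end Q g = e}"

definition VP_ge1 :: "('v, 'a) quiver \<Rightarrow> ('v, 'a) path set \<Rightarrow> ('v \<times> ('v, 'a) path) set" where
  "VP_ge1 Q Bs = {(e, g) \<in> VP Q Bs. path_len g \<ge> 1}"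

definition AP :: "('v, 'a) quiver \<Rightarrow> ('v, 'a) path set \<Rightarrow> ('a \<times> ('v, 'a) path) set" where
  "AP Q Bs = {(a, q). a \<in> arrs Q \<and> q \<in> Bs \<and> fst q = src Q a \<and> path_end Q q = tgt Q a}"

definition delta0 :: "('v, 'a) quiver \<Rightarrow> ('v, 'a) path set
      \<Rightarrow> ('v \<times> ('v, 'a) path \<Rightarrow> 'k::field) \<Rightarrow> ('a \<times> ('v, 'a) path \<Rightarrow> 'k)" where
  "delta0 Q Bs f = (\<lambda>(a, q). if (a, q) \<in> AP Q Bs then
      (\<Sum>(e, g)\<in>VP Q Bs. f (e, g) *
         ((if src Q a = e \<and> post_arr a g \<in> Bs \<and> q = post_arr a g then 1 else 0)
        - (if tgt Q a = e \<and> pre_arr Q g a \<in> Bs \<and> q = pre_arr Q g a then 1 else 0)))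
      else 0)"

definition ker_delta0_ge1 :: "('v, 'a) quiver \<Rightarrow> ('v, 'a) path set
      \<Rightarrow> ('v \<times> ('v, 'a) path \<Rightarrow> 'k::field) set" where
  "ker_delta0_ge1 Q Bs = {f. (\<forall>x. x \<notin> VP_ge1 Q Bs \<longrightarrow> f x = 0) \<and> delta0 Q Bs f = (\<lambda>_. 0)}"

text \<open>The glued vertex f_1 is represented by e_1.\<close>
definition glue_v :: "'v \<Rightarrow> 'v \<Rightarrow> 'v \<Rightarrow> 'v" where
  "glue_v e1 en v = (if v = en then e1 else v)"

definition glue_quiver :: "('v, 'a) quiver \<Rightarrow> 'v \<Rightarrow> 'v \<Rightarrow> ('v, 'a) quiver" where
  "glue_quiver Q e1 en = \<lparr>verts = verts Q - {en}, arrs = arrs Q,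
      src = glue_v e1 en \<circ> src Q, tgt = glue_v e1 en \<circ> tgt Q\<rparr>"

definition star :: "'v \<Rightarrow> 'v \<Rightarrow> ('v, 'a) path \<Rightarrow> ('v, 'a) path" where
  "star e1 en p = (glue_v e1 en (fst p), snd p)"

text \<open>Generators of I_B: the r* for r in Z_A, and the b* c* (c first, then b) with
  t(c), s(b) in {e_1, e_n}, t(c) /= s(b).\<close>
definition glue_rels :: "('v, 'a) quiver \<Rightarrow> ('v, 'a) path set \<Rightarrow> 'v \<Rightarrow> 'v \<Rightarrow> ('v, 'a) path set" where
  "glue_rels Q Z e1 en = star e1 en ` Z \<union>
     {(glue_v e1 en (src Q c), [c, b]) | b c. b \<in> arrs Q \<and> c \<in> arrs Q \<and>
        tgt Q c \<in> {e1, en} \<and> src Q b \<in> {e1, en} \<and> tgt Q c \<noteq> src Q b}"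

text \<open>psi_0 : k((Q_A)_0 || B_A) -> k((Q_B)_0 || B_B), e||p |-> e*||p*, extended linearly.\<close>
definition psi0 :: "('v, 'a) quiver \<Rightarrow> ('v, 'a) path set \<Rightarrow> 'v \<Rightarrow> 'v
      \<Rightarrow> ('v \<times> ('v, 'a) path \<Rightarrow> 'k::field) \<Rightarrow> ('v \<times> ('v, 'a) path \<Rightarrow> 'k)" where
  "psi0 Q Bs e1 en f = (\<lambda>(v, q).
      \<Sum>(e, p)\<in>VP Q Bs. if (glue_v e1 en e, star e1 en p) = (v, q) then f (e, p) else 0)"

text \<open>A product of non-composable paths is 0, hence lies in I_A.\<close>
definition nonspecial :: "('v, 'a) quiver \<Rightarrow> ('v, 'a) path set \<Rightarrow> 'v \<Rightarrow> 'v \<Rightarrow> ('v, 'a) path \<Rightarrow> bool" where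
  "nonspecial Q Z e1 en p \<longleftrightarrow>
     p \<in> basis_paths Q Z \<and>
     ((fst p = e1 \<and> path_end Q p = en) \<or> (fst p = en \<and> path_end Q p = e1)) \<and>
     (\<forall>a\<in>arrs Q. src Q a = path_end Q p \<longrightarrow> contains_rel Z (post_arr a p)) \<and>
     (\<forall>b\<in>arrs Q. tgt Q b = fst p \<longrightarrow> contains_rel Z (pre_arr Q p b))"

definition nsp :: "('v, 'a) quiver \<Rightarrow> ('v, 'a) path set \<Rightarrow> 'v \<Rightarrow> 'v \<Rightarrow> nat" where
  "nsp Q Z e1 en = card {p. nonspecial Q Z e1 en p}"

definition fscale :: "'k::field \<Rightarrow> ('i \<Rightarrow> 'k) \<Rightarrow> ('i \<Rightarrow> 'k)" where
  "fscale c f = (\<lambda>x. c * f x)"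

abbreviation fspan :: "('i \<Rightarrow> 'k::field) set \<Rightarrow> ('i \<Rightarrow> 'k) set" where
  "fspan S \<equiv> module.span fscale S"

abbreviation fdim :: "('i \<Rightarrow> 'k::field) set \<Rightarrow> nat" where
  "fdim S \<equiv> vector_space.dim fscale S"

definition Z_nsp :: "('v, 'a) quiver \<Rightarrow> ('v, 'a) path set \<Rightarrow> 'v \<Rightarrow> 'v
      \<Rightarrow> ('v \<times> ('v, 'a) path \<Rightarrow> 'k::field) set" where
  "Z_nsp Q Z e1 en = fspan {(\<lambda>x. if x = (e1, star e1 en p) then 1 else 0) | p. nonspecial Q Z e1 en p}"

end

(* Write an element of k(Q_0||B) through its coefficients at the loops e||p. The coefficient
   of a||q in delta^0 f is f(q') - f(q''), where q' and q'' are q with its last, resp. first,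
   arrow removed when that arrow is a.  The basis paths of B of positive length are exactly
   the p* for basis paths p of A (the new relations b* c* kill precisely the products that
   would jump between e_1 and e_n), and removing an arrow commutes with *.  Hence psi_0 maps
   Ker delta^0_A injectively into Ker delta^0_B; f_1||p* is a cycle for p non-special, since
   such a p is not a truncation of any basis path; and a cycle of B can be nonzero at f_1||p*
   for a path p between e_1 and e_n only if p is non-special, because otherwise p extends by
   an arrow to a basis path and the cycle condition at that arrow isolates the coefficient.
   Non-special paths join e_1 to e_n, so there are none when e_1, e_n lie in different
   blocks. *)

theory Submission
  imports Defs
begin

section \<open>Linear algebra in spaces of functions\<close>

lemma vector_space_fscale: "vector_space (fscale :: 'k::field \<Rightarrow> ('i \<Rightarrow> 'k) \<Rightarrow> ('i \<Rightarrow> 'k))"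
  by unfold_locales (auto simp: fscale_def fun_eq_iff algebra_simps)

interpretation fun_vs: vector_space "fscale :: 'k::field \<Rightarrow> ('i \<Rightarrow> 'k) \<Rightarrow> ('i \<Rightarrow> 'k)"
  by (rule vector_space_fscale)

context vector_space
begin

lemma independent_Un_if_span_Int_zero:
  assumes "independent B" "independent C" "span B \<inter> span C \<subseteq> {0}"
  shows "independent (B \<union> C)"
proof
  have no_dependent_elem: False
    if "independent X" "span X \<inter> span Y \<subseteq> {0}" "a \<in> X" "a \<in> span (X \<union> Y - {a})" for X Y a
  proof -
    have "a \<in> span ((X - {a}) \<union> Y)"
      using that(4) span_mono[of "X \<union> Y - {a}" "(X - {a}) \<union> Y"] by blast
    then obtain x y where a: "a = x + y" and x: "x \<in> span (X - {a})" and y: "y \<in> span Y"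
      unfolding span_Un by blast
    have "x \<in> span X"
      using x span_mono[of "X - {a}" X] by blast
    then have "y \<in> span X"
      using a span_diff[OF span_base[OF that(3)]] by (metis add_diff_cancel_left')
    with y that(2) have "y = 0" by blast
    with a x that(1,3) show False
      unfolding dependent_def by auto
  qed
  assume "dependent (B \<union> C)"
  then obtain a where "a \<in> B \<union> C" "a \<in> span (B \<union> C - {a})"
    unfolding dependent_def by blast
  then show False
    using no_dependent_elem[of B C a] no_dependent_elem[of C B a] assms
    by (auto simp: Un_commute Int_commute)
qed

lemma dim_image_inj_on:
  assumes "Vector_Spaces.linear scale scale f" "inj_on f (span S)"
  shows "dim (f ` S) = dim S"
proof -
  interpret f: Vector_Spaces.linear scale scale f by fact
  obtain B where B: "B \<subseteq> S" "independent B" "S \<subseteq> span B" "card B = dim S"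
    by (rule basis_exists)
  have inj_B: "inj_on f (span B)"
    using inj_on_subset[OF assms(2) span_mono[OF B(1)]] .
  have "independent (f ` B)"
    using f.independent_injective_image[OF B(2) inj_B] .
  moreover have "span B = span S"
    using B(1,3) span_mono span_span by blast
  then have "span (f ` B) = span (f ` S)"
    by (simp add: f.span_image)
  moreover have "card (f ` B) = card B"
    using card_image[OF inj_on_subset[OF inj_B span_superset]] .
  ultimately show ?thesis
    using dim_eq_card[of "f ` B" "f ` S"] B(4) by simp
qed

lemma dim_direct_sum:
  assumes "subspace S" "subspace T" "S \<inter> T \<subseteq> {0}"
    and "finite U" "S \<subseteq> span U" "T \<subseteq> span U"
  shows "dim {x + y | x y. x \<in> S \<and> y \<in> T} = dim S + dim T"
proof -
  obtain BS where BS: "BS \<subseteq> S" "independent BS" "S \<subseteq> span BS" "card BS = dim S"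
    by (rule basis_exists)
  obtain BT where BT: "BT \<subseteq> T" "independent BT" "T \<subseteq> span BT" "card BT = dim T"
    by (rule basis_exists)
  have span_BS: "span BS = S"
    using BS(1,3) assms(1) by (metis span_subspace)
  have span_BT: "span BT = T"
    using BT(1,3) assms(2) by (metis span_subspace)
  have "independent (BS \<union> BT)"
    using independent_Un_if_span_Int_zero BS(2) BT(2) assms(3) span_BS span_BT by simp
  moreover have "BS \<inter> BT = {}"
    using BS(1,2) BT(1) assms(3) dependent_zero by blast
  moreover have "finite BS"
    using independent_span_bound[OF assms(4) BS(2)] BS(1) assms(5) by blast
  moreover have "finite BT"
    using independent_span_bound[OF assms(4) BT(2)] BT(1) assms(6) by blast
  moreover have "{x + y | x y. x \<in> S \<and> y \<in> T} = span (BS \<union> BT)"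
    unfolding span_Un span_BS span_BT ..
  ultimately show ?thesis
    using BS(4) BT(4) by (simp add: dim_eq_card_independent card_Un_disjoint)
qed

end

lemma sum_fun_apply: "(\<Sum>y\<in>A. F y) x = (\<Sum>y\<in>A. F y x)"
  by (induction A rule: infinite_finite_induct) auto

definition supp_on :: "'i set \<Rightarrow> ('i \<Rightarrow> 'k::field) set" where
  "supp_on X = {f. \<forall>x. x \<notin> X \<longrightarrow> f x = 0}"

definition unit_vec :: "'i \<Rightarrow> ('i \<Rightarrow> 'k::field)" where
  "unit_vec x = (\<lambda>y. if y = x then 1 else 0)"

lemma supp_onD: "f \<in> supp_on X \<Longrightarrow> x \<notin> X \<Longrightarrow> f x = 0"
  by (simp add: supp_on_def)

lemma supp_on_mono: "X \<subseteq> Y \<Longrightarrow> supp_on X \<subseteq> supp_on Y"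
  by (auto simp: supp_on_def)

lemma supp_on_disjoint: "X \<inter> Y = {} \<Longrightarrow> supp_on X \<inter> supp_on Y = {0}"
  by (auto simp: supp_on_def fun_eq_iff) (meson disjoint_iff)

lemma subspace_supp_on: "fun_vs.subspace (supp_on X)"
  by (rule fun_vs.subspaceI) (auto simp: supp_on_def fscale_def)

lemma span_unit_vec:
  assumes "finite X"
  shows "fun_vs.span (unit_vec ` X) = (supp_on X :: ('i \<Rightarrow> 'k::field) set)"
proof
  show "fun_vs.span (unit_vec ` X) \<subseteq> (supp_on X :: ('i \<Rightarrow> 'k) set)"
    by (intro fun_vs.span_minimal subspace_supp_on) (auto simp: supp_on_def unit_vec_def)
  show "supp_on X \<subseteq> fun_vs.span (unit_vec ` X :: ('i \<Rightarrow> 'k) set)"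
  proof
    fix f :: "'i \<Rightarrow> 'k" assume f: "f \<in> supp_on X"
    have "f = (\<Sum>x\<in>X. fscale (f x) (unit_vec x))"
      using f assms by (auto simp: fun_eq_iff sum_fun_apply fscale_def unit_vec_def supp_on_def if_distrib cong: if_cong)
    also have "\<dots> \<in> fun_vs.span (unit_vec ` X)"
      by (intro fun_vs.span_sum fun_vs.span_scale fun_vs.span_base) auto
    finally show "f \<in> fun_vs.span (unit_vec ` X)" .
  qed
qed

lemma independent_unit_vec: "fun_vs.independent (unit_vec ` X :: ('i \<Rightarrow> 'k::field) set)"
proof
  assume "fun_vs.dependent (unit_vec ` X :: ('i \<Rightarrow> 'k) set)"
  then obtain x where "x \<in> X" and x: "unit_vec x \<in> fun_vs.span (unit_vec ` X - {unit_vec x :: 'i \<Rightarrow> 'k})"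
    unfolding fun_vs.dependent_def by auto
  have "fun_vs.span (unit_vec ` X - {unit_vec x :: 'i \<Rightarrow> 'k}) \<subseteq> supp_on (- {x})"
    by (intro fun_vs.span_minimal subspace_supp_on) (auto simp: supp_on_def unit_vec_def)
  with x have "(unit_vec x :: 'i \<Rightarrow> 'k) x = 0"
    by (auto simp: supp_on_def)
  then show False
    by (simp add: unit_vec_def)
qed

lemma dim_supp_on:
  assumes "finite X"
  shows "fdim (supp_on X :: ('i \<Rightarrow> 'k::field) set) = card X"
proof -
  have "inj_on (unit_vec :: 'i \<Rightarrow> 'i \<Rightarrow> 'k) X"
    by (rule inj_onI) (metis unit_vec_def zero_neq_one)
  then have "card (unit_vec ` X :: ('i \<Rightarrow> 'k) set) = card X"
    by (rule card_image)
  moreover have "fdim (unit_vec ` X :: ('i \<Rightarrow> 'k) set) = card (unit_vec ` X :: ('i \<Rightarrow> 'k) set)"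
    by (rule fun_vs.dim_eq_card_independent[OF independent_unit_vec])
  ultimately show ?thesis
    using fun_vs.dim_span[of "unit_vec ` X :: ('i \<Rightarrow> 'k) set"] by (simp add: span_unit_vec[OF assms])
qed

section \<open>Paths and the coefficients of delta^0\<close>

abbreviation is_chain :: "('v, 'a) quiver \<Rightarrow> ('v, 'a) path \<Rightarrow> bool" where
  "is_chain Q p \<equiv> arrow_chain Q (fst p) (snd p)"

lemma path_end_Nil [simp]: "path_end Q (v, []) = v"
  by (simp add: path_end_def)

lemma path_end_Cons: "path_end Q (v, a # l) = path_end Q (tgt Q a, l)"
  by (cases l) (auto simp: path_end_def)

lemma arrow_chain_append:
  "arrow_chain Q v (l1 @ l2) \<longleftrightarrow> arrow_chain Q v l1 \<and> arrow_chain Q (path_end Q (v, l1)) l2"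
  by (induction l1 arbitrary: v) (auto simp: path_end_Cons)

lemma arrow_chain_arrs: "arrow_chain Q v l \<Longrightarrow> set l \<subseteq> arrs Q"
  by (induction l arbitrary: v) auto

lemma arrow_chain_hd: "arrow_chain Q v l \<Longrightarrow> l \<noteq> [] \<Longrightarrow> src Q (hd l) = v"
  by (cases l) auto

(* diag p represents the element e||p of k(Q_0||B), where e is the start of p. *)
definition diag :: "('v, 'a) path \<Rightarrow> 'v \<times> ('v, 'a) path" where
  "diag p = (fst p, p)"

definition drop_last :: "('v, 'a) path \<Rightarrow> ('v, 'a) path" where
  "drop_last p = (fst p, butlast (snd p))"

definition drop_first :: "('v, 'a) quiver \<Rightarrow> ('v, 'a) path \<Rightarrow> ('v, 'a) path" where
  "drop_first Q p = (tgt Q (hd (snd p)), tl (snd p))"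

lemma post_arr_drop_last: "snd q \<noteq> [] \<Longrightarrow> post_arr (last (snd q)) (drop_last q) = q"
  by (simp add: drop_last_def post_arr_def)

lemma pre_arr_drop_first:
  "is_chain Q q \<Longrightarrow> snd q \<noteq> [] \<Longrightarrow> pre_arr Q (drop_first Q q) (hd (snd q)) = q"
  by (simp add: drop_first_def pre_arr_def arrow_chain_hd prod_eq_iff)

lemma is_chain_drop_last:
  assumes "is_chain Q q" "snd q \<noteq> []"
  shows "is_chain Q (drop_last q)" "path_end Q (drop_last q) = src Q (last (snd q))"
    and "path_end Q q = tgt Q (last (snd q))"
proof -
  have "snd q = butlast (snd q) @ [last (snd q)]"
    using assms(2) by simp
  then show "is_chain Q (drop_last q)" "path_end Q (drop_last q) = src Q (last (snd q))"
    using assms(1) arrow_chain_append[of Q "fst q" "butlast (snd q)" "[last (snd q)]"]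
    by (auto simp: drop_last_def)
  show "path_end Q q = tgt Q (last (snd q))"
    using assms(2) by (simp add: path_end_def)
qed

lemma is_chain_drop_first:
  assumes "is_chain Q q" "snd q \<noteq> []"
  shows "is_chain Q (drop_first Q q)" "hd (snd q) \<in> arrs Q" "src Q (hd (snd q)) = fst q"
    and "path_end Q (drop_first Q q) = path_end Q q"
proof -
  obtain a l where "snd q = a # l"
    using assms(2) by (cases "snd q") auto
  moreover have "path_end Q q = path_end Q (fst q, snd q)"
    by simp
  ultimately show "is_chain Q (drop_first Q q)" "hd (snd q) \<in> arrs Q" "src Q (hd (snd q)) = fst q"
    "path_end Q (drop_first Q q) = path_end Q q"
    using assms(1) by (auto simp: drop_first_def path_end_Cons)
qed

(* The coefficient of a||q in delta^0 f (see delta0_eq_boundary): q = a p or q = p a. *)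
definition boundary :: "('v, 'a) quiver \<Rightarrow> ('v \<times> ('v, 'a) path \<Rightarrow> 'k::field) \<Rightarrow> 'a
      \<Rightarrow> ('v, 'a) path \<Rightarrow> 'k" where
  "boundary Q f a q =
     (if snd q \<noteq> [] \<and> last (snd q) = a then f (diag (drop_last q)) else 0)
   - (if snd q \<noteq> [] \<and> hd (snd q) = a then f (diag (drop_first Q q)) else 0)"

lemma VP_ge1_iff: "(e, p) \<in> VP_ge1 Q Bs \<longleftrightarrow>
    e = fst p \<and> fst p \<in> verts Q \<and> p \<in> Bs \<and> path_end Q p = fst p \<and> snd p \<noteq> []"
  by (auto simp: VP_ge1_def VP_def path_len_def Suc_le_eq)

lemma sum_supported_delta:
  "finite S \<Longrightarrow> f \<in> supp_on S \<Longrightarrow> (\<Sum>x\<in>S. if x = c \<and> P then f x else 0) = (if P then f c else 0)"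
  by (cases P) (auto simp: sum.delta supp_on_def)

lemma delta0_eq_boundary:
  assumes fin: "finite (VP Q Bs)" and f: "f \<in> supp_on (VP Q Bs)" and aq: "(a, q) \<in> AP Q Bs"
  shows "delta0 Q Bs f (a, q) = boundary Q f a q"
proof -
  define P where "P = (snd q \<noteq> [] \<and> last (snd q) = a)"
  define R where "R = (snd q \<noteq> [] \<and> hd (snd q) = a)"
  have q: "q \<in> Bs" "fst q = src Q a"
    using aq by (auto simp: AP_def)
  have post: "(src Q a = e \<and> post_arr a p \<in> Bs \<and> q = post_arr a p) \<longleftrightarrow> (e, p) = diag (drop_last q) \<and> P"
    if "fst p = e" for e p
    using that q by (auto simp: P_def diag_def drop_last_def post_arr_def prod_eq_iff) (metis prod.collapse)
  have pre: "(tgt Q a = e \<and> pre_arr Q p a \<in> Bs \<and> q = pre_arr Q p a) \<longleftrightarrow> (e, p) = diag (drop_first Q q) \<and> R"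
    if "fst p = e" for e p
    using that q by (auto simp: R_def diag_def drop_first_def pre_arr_def prod_eq_iff) (metis prod.collapse)
  have "delta0 Q Bs f (a, q) = (\<Sum>x\<in>VP Q Bs. (if x = diag (drop_last q) \<and> P then f x else 0)
                                          - (if x = diag (drop_first Q q) \<and> R then f x else 0))"
    unfolding delta0_def using aq
    by (auto intro!: sum.cong simp: VP_def post pre)
  also have "\<dots> = boundary Q f a q"
    by (simp add: sum_subtractf sum_supported_delta[OF fin f] boundary_def P_def R_def)
  finally show ?thesis .
qed

lemma boundary_eq_0_if_not_AP:
  assumes f: "f \<in> supp_on (VP Q Bs)" and q: "q \<in> Bs" "is_chain Q q" and a: "a \<in> arrs Q"
    and not_AP: "(a, q) \<notin> AP Q Bs"
  shows "boundary Q f a q = 0"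
proof -
  have "f (diag (drop_last q)) = 0" if "snd q \<noteq> []" "last (snd q) = a"
  proof (rule supp_onD[OF f], rule notI)
    assume "diag (drop_last q) \<in> VP Q Bs"
    then have "path_end Q (drop_last q) = fst q"
      by (simp add: VP_def diag_def drop_last_def)
    then have "(a, q) \<in> AP Q Bs"
      using is_chain_drop_last[OF q(2) that(1)] that q(1) a by (simp add: AP_def)
    with not_AP show False ..
  qed
  moreover have "f (diag (drop_first Q q)) = 0" if "snd q \<noteq> []" "hd (snd q) = a"
  proof (rule supp_onD[OF f], rule notI)
    assume "diag (drop_first Q q) \<in> VP Q Bs"
    then have "path_end Q (drop_first Q q) = tgt Q a"
      using that(2) by (simp add: VP_def diag_def drop_first_def)
    then have "(a, q) \<in> AP Q Bs"
      using is_chain_drop_first[OF q(2) that(1)] that q(1) a by (simp add: AP_def)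
    with not_AP show False ..
  qed
  ultimately show ?thesis
    by (simp add: boundary_def)
qed

lemma ker_delta0_ge1_iff:
  assumes fin: "finite (VP Q Bs)" and chains: "\<forall>q\<in>Bs. is_chain Q q"
  shows "f \<in> ker_delta0_ge1 Q Bs \<longleftrightarrow>
           f \<in> supp_on (VP_ge1 Q Bs) \<and> (\<forall>a\<in>arrs Q. \<forall>q\<in>Bs. boundary Q f a q = 0)"
proof -
  have "delta0 Q Bs f = (\<lambda>_. 0) \<longleftrightarrow> (\<forall>a\<in>arrs Q. \<forall>q\<in>Bs. boundary Q f a q = 0)"
    if f: "f \<in> supp_on (VP Q Bs)"
  proof -
    have "delta0 Q Bs f = (\<lambda>_. 0) \<longleftrightarrow> (\<forall>(a, q)\<in>AP Q Bs. boundary Q f a q = 0)"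
      using delta0_eq_boundary[OF fin f] by (auto simp: fun_eq_iff delta0_def)
    also have "\<dots> \<longleftrightarrow> (\<forall>a\<in>arrs Q. \<forall>q\<in>Bs. boundary Q f a q = 0)"
    proof (intro iffI ballI)
      fix a q assume "\<forall>(a, q)\<in>AP Q Bs. boundary Q f a q = 0" "a \<in> arrs Q" "q \<in> Bs"
      then show "boundary Q f a q = 0"
        using boundary_eq_0_if_not_AP[OF f] chains by (cases "(a, q) \<in> AP Q Bs") auto
    qed (auto simp: AP_def)
    finally show ?thesis .
  qed
  moreover have "supp_on (VP_ge1 Q Bs) \<subseteq> supp_on (VP Q Bs)"
    by (rule supp_on_mono) (auto simp: VP_ge1_def)
  ultimately show ?thesis
    unfolding ker_delta0_ge1_def supp_on_def[of "VP_ge1 Q Bs"] by blast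
qed

lemma boundary_cong:
  assumes "\<And>p. is_chain Q p \<Longrightarrow> F (diag p) = G (diag p)" and "is_chain Q q"
  shows "boundary Q F a q = boundary Q G a q"
  using assms is_chain_drop_last(1)[OF assms(2)] is_chain_drop_first(1)[OF assms(2)]
  by (simp add: boundary_def)

lemma boundary_post_arr:
  "snd q \<noteq> [] \<Longrightarrow> hd (snd q) \<noteq> a \<Longrightarrow> boundary Q f a (post_arr a q) = f (diag q)"
  by (simp add: boundary_def post_arr_def drop_last_def)

lemma boundary_pre_arr:
  "tgt Q b = fst q \<Longrightarrow> snd q \<noteq> [] \<Longrightarrow> last (snd q) \<noteq> b \<Longrightarrow>
     boundary Q f b (pre_arr Q q b) = - f (diag q)"
  by (simp add: boundary_def pre_arr_def drop_first_def)

lemma delta0_add: "delta0 Q Bs (f + g) = delta0 Q Bs f + delta0 Q Bs g"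
  by (auto simp: delta0_def fun_eq_iff distrib_right sum.distrib split_def)

lemma delta0_fscale: "delta0 Q Bs (fscale c f) = fscale c (delta0 Q Bs f)"
  by (auto simp: delta0_def fun_eq_iff fscale_def sum_distrib_left split_def mult.assoc)

lemma subspace_ker_delta0_ge1: "fun_vs.subspace (ker_delta0_ge1 Q Bs)"
proof (rule fun_vs.subspaceI)
  show "0 \<in> ker_delta0_ge1 Q Bs"
    by (auto simp: ker_delta0_ge1_def delta0_def fun_eq_iff split: prod.split)
qed (auto simp: ker_delta0_ge1_def delta0_add delta0_fscale[unfolded fscale_def] fscale_def)

lemma linear_psi0: "Vector_Spaces.linear fscale fscale (psi0 Q Bs e1 en :: _ \<Rightarrow> _ \<Rightarrow> 'k::field)"
proof -
  have "psi0 Q Bs e1 en (f + g) = psi0 Q Bs e1 en f + psi0 Q Bs e1 en g" for f g :: "_ \<Rightarrow> 'k::field"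
    by (auto simp: psi0_def fun_eq_iff split_def sum.distrib[symmetric] intro!: sum.cong)
  moreover have "psi0 Q Bs e1 en (fscale c f) = fscale c (psi0 Q Bs e1 en f)" for c and f :: "_ \<Rightarrow> 'k::field"
    by (auto simp: psi0_def fun_eq_iff split_def fscale_def sum_distrib_left intro!: sum.cong)
  ultimately show ?thesis
    by (simp add: Vector_Spaces.linear_iff vector_space_fscale)
qed

lemma same_block_path_end: "arrow_chain Q v l \<Longrightarrow> same_block Q v (path_end Q (v, l))"
proof (induction l arbitrary: v)
  case (Cons a l)
  then have "same_block Q (tgt Q a) (path_end Q (tgt Q a, l))" and a: "a \<in> arrs Q" "src Q a = v"
    by auto
  moreover have "(v, tgt Q a) \<in> {(src Q a, tgt Q a) | a. a \<in> arrs Q}"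
    using a by blast
  ultimately show ?case
    unfolding same_block_def path_end_Cons by (blast intro: converse_rtrancl_into_rtrancl)
qed (simp add: same_block_def)

lemma same_block_sym: "same_block Q v w \<Longrightarrow> same_block Q w v"
  unfolding same_block_def by (rule symD[OF sym_rtrancl]) (auto simp: sym_def)

lemma contains_rel_sublist: "contains_rel Z p \<Longrightarrow> sublist (snd p) (snd q) \<Longrightarrow> contains_rel Z q"
  unfolding contains_rel_def by (blast intro: sublist_order.order.trans)

section \<open>Monomial algebras\<close>

locale monomial_algebra =
  fixes Q :: "('v, 'a) quiver" and Z :: "('v, 'a) path set"
  assumes monomial: "monomial_data Q Z"
begin

abbreviation BA :: "('v, 'a) path set" where
  "BA \<equiv> basis_paths Q Z"

lemma arr_verts: "a \<in> arrs Q \<Longrightarrow> src Q a \<in> verts Q \<and> tgt Q a \<in> verts Q"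
  using monomial by (auto simp: monomial_data_def)

lemma basis_path_chain: "p \<in> BA \<Longrightarrow> is_chain Q p"
  by (simp add: basis_paths_def is_path_def)

lemma finite_basis_paths: "finite BA"
proof -
  from monomial obtain N where N: "\<forall>p. is_path Q p \<and> path_len p \<ge> N \<longrightarrow> contains_rel Z p"
    by (auto simp: monomial_data_def)
  have "BA \<subseteq> verts Q \<times> {l. set l \<subseteq> arrs Q \<and> length l \<le> N}"
    using N by (force simp: basis_paths_def is_path_def path_len_def dest: arrow_chain_arrs)
  moreover have "finite (verts Q)" "finite (arrs Q)"
    using monomial by (auto simp: monomial_data_def)
  ultimately show ?thesis
    using finite_lists_length_le[of "arrs Q" N] finite_subset by blast
qed

lemma finite_VP: "finite (VP Q BA)"
  by (rule finite_subset[of _ "verts Q \<times> BA"])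
    (use monomial finite_basis_paths in \<open>auto simp: VP_def monomial_data_def\<close>)

lemma drop_last_basis_path: "q \<in> BA \<Longrightarrow> snd q \<noteq> [] \<Longrightarrow> drop_last q \<in> BA"
  using is_chain_drop_last(1)[of Q q] contains_rel_sublist[of Z "drop_last q" q]
  by (auto simp: basis_paths_def is_path_def drop_last_def)

lemma drop_first_basis_path: "q \<in> BA \<Longrightarrow> snd q \<noteq> [] \<Longrightarrow> drop_first Q q \<in> BA"
  using is_chain_drop_first(1,2)[of Q q] contains_rel_sublist[of Z "drop_first Q q" q] arr_verts
  by (auto simp: basis_paths_def is_path_def drop_first_def)

lemma post_arr_basis_path:
  "q \<in> BA \<Longrightarrow> a \<in> arrs Q \<Longrightarrow> src Q a = path_end Q q \<Longrightarrow> \<not> contains_rel Z (post_arr a q)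
     \<Longrightarrow> post_arr a q \<in> BA"
  by (simp add: basis_paths_def is_path_def post_arr_def arrow_chain_append)

lemma pre_arr_basis_path:
  "q \<in> BA \<Longrightarrow> b \<in> arrs Q \<Longrightarrow> tgt Q b = fst q \<Longrightarrow> \<not> contains_rel Z (pre_arr Q q b)
     \<Longrightarrow> pre_arr Q q b \<in> BA"
  using arr_verts by (simp add: basis_paths_def is_path_def pre_arr_def)

lemma ker_delta0_ge1_iff_boundary:
  "f \<in> ker_delta0_ge1 Q BA \<longleftrightarrow>
     f \<in> supp_on (VP_ge1 Q BA) \<and> (\<forall>a\<in>arrs Q. \<forall>q\<in>BA. boundary Q f a q = 0)"
  using ker_delta0_ge1_iff[OF finite_VP] basis_path_chain by blast

(* For a||q in k(Q_1||B) the loops met by the boundary are again in B. *)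
lemma boundary_cong_VP:
  assumes aq: "(a, q) \<in> AP Q BA" and FG: "\<forall>y\<in>VP Q BA. F y = G y"
  shows "boundary Q F a q = boundary Q G a q"
proof -
  have q: "q \<in> BA" "is_chain Q q" "fst q = src Q a" "path_end Q q = tgt Q a"
    using aq basis_path_chain[of q] by (auto simp: AP_def)
  have "diag (drop_last q) \<in> VP Q BA" if "snd q \<noteq> []" "last (snd q) = a"
    using that q is_chain_drop_last[OF q(2) that(1)] drop_last_basis_path[OF q(1) that(1)] arr_verts
    by (auto simp: VP_def diag_def drop_last_def basis_paths_def is_path_def)
  moreover have "diag (drop_first Q q) \<in> VP Q BA" if "snd q \<noteq> []" "hd (snd q) = a"
    using that q is_chain_drop_first[OF q(2) that(1)] drop_first_basis_path[OF q(1) that(1)] arr_verts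
    by (auto simp: VP_def diag_def drop_first_def basis_paths_def is_path_def)
  ultimately show ?thesis
    using FG by (auto simp: boundary_def)
qed

end

section \<open>Gluing two vertices\<close>

definition glue_pair :: "'v \<Rightarrow> 'v \<Rightarrow> 'v \<times> ('v, 'a) path \<Rightarrow> 'v \<times> ('v, 'a) path" where
  "glue_pair e1 en x = (glue_v e1 en (fst x), star e1 en (snd x))"

lemma glue_quiver_simps [simp]:
  "verts (glue_quiver Q e1 en) = verts Q - {en}" "arrs (glue_quiver Q e1 en) = arrs Q"
  "src (glue_quiver Q e1 en) a = glue_v e1 en (src Q a)"
  "tgt (glue_quiver Q e1 en) a = glue_v e1 en (tgt Q a)"
  by (simp_all add: glue_quiver_def)

lemma star_simps [simp]:
  "fst (star e1 en p) = glue_v e1 en (fst p)" "snd (star e1 en p) = snd p"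
  by (simp_all add: star_def)

lemma glue_pair_diag [simp]: "glue_pair e1 en (diag p) = diag (star e1 en p)"
  by (simp add: glue_pair_def diag_def)

lemma path_end_star: "path_end (glue_quiver Q e1 en) (star e1 en p) = glue_v e1 en (path_end Q p)"
  by (simp add: path_end_def)

lemma arrow_chain_glue: "arrow_chain Q v l \<Longrightarrow> arrow_chain (glue_quiver Q e1 en) (glue_v e1 en v) l"
  by (induction l arbitrary: v) auto

lemma star_inj:
  assumes "is_chain Q p" "is_chain Q p'" "snd p \<noteq> []" "star e1 en p = star e1 en p'"
  shows "p = p'"
proof -
  have "snd p = snd p'"
    using assms(4) by (metis star_simps(2))
  with assms(1-3) show ?thesis
    by (metis arrow_chain_hd prod.expand)
qed

lemma boundary_glue:
  "boundary (glue_quiver Q e1 en) h a (star e1 en q) = boundary Q (h \<circ> glue_pair e1 en) a q"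
proof -
  have "drop_last (star e1 en q) = star e1 en (drop_last q)"
    "drop_first (glue_quiver Q e1 en) (star e1 en q) = star e1 en (drop_first Q q)"
    by (simp_all add: drop_last_def drop_first_def star_def)
  then show ?thesis
    by (simp add: boundary_def)
qed

lemma contains_rel_glue_rels:
  assumes "contains_rel Z p"
  shows "contains_rel (glue_rels Q Z e1 en) (star e1 en p)"
proof -
  obtain r where "r \<in> Z" "sublist (snd r) (snd p)"
    using assms by (auto simp: contains_rel_def)
  then have "star e1 en r \<in> glue_rels Q Z e1 en" "sublist (snd (star e1 en r)) (snd (star e1 en p))"
    by (auto simp: glue_rels_def)
  then show ?thesis
    unfolding contains_rel_def by blast
qed

lemma psi0_eq_sum:
  "psi0 Q Bs e1 en f x = (\<Sum>y\<in>VP Q Bs. if glue_pair e1 en y = x then f y else 0)"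
  unfolding psi0_def glue_pair_def by (cases x) (auto intro!: sum.cong)

locale gluing = monomial_algebra Q Z for Q :: "('v, 'a) quiver" and Z +
  fixes e1 en :: 'v
  assumes e1: "e1 \<in> verts Q" and e1_ne_en: "e1 \<noteq> en"
begin

abbreviation g :: "'v \<Rightarrow> 'v" where "g \<equiv> glue_v e1 en"
abbreviation st :: "('v, 'a) path \<Rightarrow> ('v, 'a) path" where "st \<equiv> star e1 en"
abbreviation QB :: "('v, 'a) quiver" where "QB \<equiv> glue_quiver Q e1 en"
abbreviation BB :: "('v, 'a) path set" where "BB \<equiv> basis_paths QB (glue_rels Q Z e1 en)"
abbreviation VA :: "('v \<times> ('v, 'a) path) set" where "VA \<equiv> VP_ge1 Q BA"
abbreviation VB :: "('v \<times> ('v, 'a) path) set" where "VB \<equiv> VP_ge1 QB BB"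

lemma glue_v_in: "v \<in> verts Q \<Longrightarrow> g v \<in> verts Q - {en}"
  using e1 e1_ne_en by (auto simp: glue_v_def)

lemma glue_v_eqD: "g v = g w \<Longrightarrow> v \<noteq> w \<Longrightarrow> v \<in> {e1, en} \<and> w \<in> {e1, en}"
  by (auto simp: glue_v_def split: if_splits)

lemma glue_v_e1: "v \<in> {e1, en} \<Longrightarrow> g v = e1"
  by (auto simp: glue_v_def)

lemma star_basis_path: "p \<in> BA \<Longrightarrow> st p \<in> BB"
proof -
  assume p: "p \<in> BA"
  then have chain: "is_chain Q p" and "fst p \<in> verts Q" and no_rel: "\<not> contains_rel Z p"
    by (auto simp: basis_paths_def is_path_def)
  then have "is_path QB (st p)"
    using glue_v_in arrow_chain_glue by (auto simp: is_path_def)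
  moreover have "\<not> contains_rel (glue_rels Q Z e1 en) (st p)"
  proof
    assume "contains_rel (glue_rels Q Z e1 en) (st p)"
    then obtain r where r: "r \<in> glue_rels Q Z e1 en" "sublist (snd r) (snd p)"
      by (auto simp: contains_rel_def)
    show False
    proof (cases "r \<in> st ` Z")
      case True
      with r no_rel show False
        by (auto simp: contains_rel_def)
    next
      case False
      with r obtain b c where "sublist [c, b] (snd p)" "tgt Q c \<noteq> src Q b"
        by (auto simp: glue_rels_def)
      with chain show False
        by (auto simp: sublist_def arrow_chain_append)
    qed
  qed
  ultimately show ?thesis
    by (simp add: basis_paths_def)
qed

(* The consecutive arrows c, b of l never form one of the new relations b* c*. *)
abbreviation no_jump :: "'a list \<Rightarrow> bool" where
  "no_jump l \<equiv>
     \<forall>c b. sublist [c, b] l \<longrightarrow> tgt Q c \<in> {e1, en} \<longrightarrow> src Q b \<in> {e1, en} \<longrightarrow> tgt Q c = src Q b"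

lemma arrow_chain_unglue:
  assumes "arrow_chain QB w l" "l \<noteq> []"
    and "no_jump l"
  shows "arrow_chain Q (src Q (hd l)) l \<and> w = g (src Q (hd l))"
  using assms
proof (induction l arbitrary: w)
  case (Cons a l)
  show ?case
  proof (cases l)
    case (Cons b l')
    have "no_jump l"
      using Cons.prems(3) by (meson sublist_Cons_right)
    with Cons.IH[of "g (tgt Q a)"] Cons.prems(1) \<open>l = b # l'\<close>
    have IH: "arrow_chain Q (src Q b) l" "g (tgt Q a) = g (src Q b)"
      by auto
    moreover have "tgt Q a = src Q b"
    proof (rule ccontr)
      assume "tgt Q a \<noteq> src Q b"
      moreover have "sublist [a, b] (a # l)"
        using \<open>l = b # l'\<close> by simp
      ultimately show False
        using glue_v_eqD[OF IH(2)] Cons.prems(3) by blast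
    qed
    ultimately show ?thesis
      using Cons.prems(1) \<open>l = b # l'\<close> by auto
  qed (use Cons.prems in auto)
qed simp

lemma basis_path_unglue:
  assumes q: "q \<in> BB" "snd q \<noteq> []"
  obtains p where "p \<in> BA" "st p = q"
proof
  let ?p = "(src Q (hd (snd q)), snd q)"
  have chain: "arrow_chain QB (fst q) (snd q)" and no_rel: "\<not> contains_rel (glue_rels Q Z e1 en) q"
    using q(1) by (auto simp: basis_paths_def is_path_def)
  have "no_jump (snd q)"
  proof (intro allI impI, rule ccontr)
    fix c b
    assume "sublist [c, b] (snd q)" "tgt Q c \<in> {e1, en}" "src Q b \<in> {e1, en}" "tgt Q c \<noteq> src Q b"
    moreover have "set [c, b] \<subseteq> arrs Q"
      using set_mono_sublist[OF \<open>sublist [c, b] (snd q)\<close>] arrow_chain_arrs[OF chain] by auto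
    ultimately have "(g (src Q c), [c, b]) \<in> glue_rels Q Z e1 en"
      unfolding glue_rels_def by auto
    with \<open>sublist [c, b] (snd q)\<close> no_rel show False
      by (force simp: contains_rel_def)
  qed
  from arrow_chain_unglue[OF chain q(2) this]
  have "is_chain Q ?p" and fst_q: "fst q = g (src Q (hd (snd q)))"
    by auto
  moreover have "fst ?p \<in> verts Q"
    using arrow_chain_arrs[OF chain] q(2) arr_verts by (simp add: subset_iff)
  moreover have "st ?p = q"
    using fst_q by (simp add: star_def prod_eq_iff)
  ultimately show "?p \<in> BA" "st ?p = q"
    using no_rel contains_rel_glue_rels[of Z ?p Q e1 en] by (auto simp: basis_paths_def is_path_def)
qed

lemma finite_BB: "finite BB"
proof -
  have "BB \<subseteq> st ` BA \<union> (\<lambda>v. (v, [])) ` verts Q"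
  proof
    fix q assume q: "q \<in> BB"
    show "q \<in> st ` BA \<union> (\<lambda>v. (v, [])) ` verts Q"
    proof (cases "snd q = []")
      case True
      then show ?thesis
        using q by (auto simp: basis_paths_def is_path_def image_iff prod_eq_iff)
    next
      case False
      then show ?thesis
        using basis_path_unglue[OF q] by blast
    qed
  qed
  moreover have "finite (verts Q)"
    using monomial by (simp add: monomial_data_def)
  ultimately show ?thesis
    using finite_basis_paths finite_subset by blast
qed

lemma finite_VP_B: "finite (VP QB BB)"
  by (rule finite_subset[of _ "verts QB \<times> BB"])
    (use finite_BB monomial in \<open>auto simp: VP_def monomial_data_def\<close>)

lemma finite_VB: "finite VB"
  by (rule finite_subset[OF _ finite_VP_B]) (auto simp: VP_ge1_def)

lemma ker_glue_iff:
  "h \<in> ker_delta0_ge1 QB BB \<longleftrightarrow>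
     h \<in> supp_on VB \<and> (\<forall>a\<in>arrs Q. \<forall>q\<in>BA. boundary Q (h \<circ> glue_pair e1 en) a q = 0)"
proof -
  have "(\<forall>q'\<in>BB. boundary QB h a q' = 0) \<longleftrightarrow> (\<forall>q\<in>BA. boundary Q (h \<circ> glue_pair e1 en) a q = 0)"
    for a
  proof
    assume "\<forall>q'\<in>BB. boundary QB h a q' = 0"
    then show "\<forall>q\<in>BA. boundary Q (h \<circ> glue_pair e1 en) a q = 0"
      using star_basis_path boundary_glue by metis
  next
    assume BA_zero: "\<forall>q\<in>BA. boundary Q (h \<circ> glue_pair e1 en) a q = 0"
    show "\<forall>q'\<in>BB. boundary QB h a q' = 0"
    proof
      fix q' assume q': "q' \<in> BB"
      show "boundary QB h a q' = 0"
      proof (cases "snd q' = []")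
        case False
        then obtain q where "q \<in> BA" "st q = q'"
          using basis_path_unglue[OF q'] by blast
        then show ?thesis
          using BA_zero boundary_glue by metis
      qed (simp add: boundary_def)
    qed
  qed
  moreover have "\<forall>q\<in>BB. is_chain QB q"
    by (simp add: basis_paths_def is_path_def)
  then have "h \<in> ker_delta0_ge1 QB BB \<longleftrightarrow>
      h \<in> supp_on VB \<and> (\<forall>a\<in>arrs Q. \<forall>q'\<in>BB. boundary QB h a q' = 0)"
    using ker_delta0_ge1_iff[OF finite_VP_B] by simp
  ultimately show ?thesis
    by blast
qed

lemma diag_in_VA_iff: "diag p \<in> VA \<longleftrightarrow> p \<in> BA \<and> snd p \<noteq> [] \<and> path_end Q p = fst p"
  by (auto simp: diag_def VP_ge1_iff basis_paths_def is_path_def)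

lemma VA_elem:
  assumes "y \<in> VA"
  obtains p where "y = diag p" "p \<in> BA" "snd p \<noteq> []" "path_end Q p = fst p"
  using assms that by (cases y) (auto simp: VP_ge1_iff diag_def)

lemma glue_pair_VA_subset_VB: "glue_pair e1 en ` VA \<subseteq> VB"
proof
  fix x assume "x \<in> glue_pair e1 en ` VA"
  then obtain p where "x = diag (st p)" "diag p \<in> VA"
    by (metis VA_elem glue_pair_diag image_iff)
  then show "x \<in> VB"
    using star_basis_path glue_v_in
    by (auto simp: diag_in_VA_iff VP_ge1_iff diag_def path_end_star basis_paths_def is_path_def)
qed

lemma VB_elem:
  assumes "x \<in> VB"
  obtains q where "q \<in> BA" "snd q \<noteq> []" "x = diag (st q)" "g (path_end Q q) = g (fst q)"
proof -
  obtain q' where x: "x = diag q'" "q' \<in> BB" "snd q' \<noteq> []" "path_end QB q' = fst q'"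
    using assms by (cases x) (auto simp: VP_ge1_iff diag_def)
  then obtain q where q: "q \<in> BA" "st q = q'"
    using basis_path_unglue by blast
  with x have "x = diag (st q)" "g (path_end Q q) = g (fst q)"
    using path_end_star[of Q e1 en q] by auto
  moreover have "snd q \<noteq> []"
    using q(2) x(3) by auto
  ultimately show ?thesis
    using that q(1) by blast
qed

lemma psi0_diag_star:
  assumes f: "f \<in> supp_on VA" and p: "is_chain Q p"
  shows "psi0 Q BA e1 en f (diag (st p)) = f (diag p)"
proof -
  have "psi0 Q BA e1 en f (diag (st p)) = (\<Sum>y\<in>VP Q BA. if y = diag p \<and> True then f y else 0)"
    unfolding psi0_eq_sum
  proof (rule sum.cong[OF refl])
    fix y
    show "(if glue_pair e1 en y = diag (st p) then f y else 0) = (if y = diag p \<and> True then f y else 0)"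
    proof (cases "y \<in> VA")
      case True
      then obtain q where q: "y = diag q" "is_chain Q q" "snd q \<noteq> []"
        using basis_path_chain by (metis VA_elem)
      then have "glue_pair e1 en y = diag (st p) \<longleftrightarrow> y = diag p"
        using star_inj[of Q q p e1 en, OF q(2) p q(3)] by (auto simp: diag_def glue_pair_def)
      then show ?thesis
        by simp
    qed (simp add: supp_onD[OF f])
  qed
  also have "\<dots> = f (diag p)"
  proof -
    have "f \<in> supp_on (VP Q BA)"
      using f supp_on_mono[of VA "VP Q BA"] by (auto simp: VP_ge1_def)
    then show ?thesis
      using sum_supported_delta[OF finite_VP, of f "diag p" True] by simp
  qed
  finally show ?thesis .
qed

lemma psi0_eq_0:
  assumes "f \<in> supp_on VA" "x \<notin> glue_pair e1 en ` VA"
  shows "psi0 Q BA e1 en f x = 0"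
  unfolding psi0_eq_sum
proof (rule sum.neutral, intro ballI)
  fix y
  show "(if glue_pair e1 en y = x then f y else 0) = 0"
    using assms supp_onD[OF assms(1), of y] by (cases "y \<in> VA") auto
qed

lemma psi0_supp_on: "f \<in> supp_on VA \<Longrightarrow> psi0 Q BA e1 en f \<in> supp_on (glue_pair e1 en ` VA)"
  using psi0_eq_0 by (auto simp: supp_on_def)

lemma inj_on_psi0: "inj_on (psi0 Q BA e1 en :: _ \<Rightarrow> _ \<Rightarrow> 'k::field) (supp_on VA)"
proof
  fix f f' :: "_ \<Rightarrow> 'k" assume f: "f \<in> supp_on VA" "f' \<in> supp_on VA"
    and eq: "psi0 Q BA e1 en f = psi0 Q BA e1 en f'"
  have "f y = f' y" for y
  proof (cases "y \<in> VA")
    case True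
    then obtain q where "y = diag q" "is_chain Q q"
      using basis_path_chain by (metis VA_elem)
    then show ?thesis
      using psi0_diag_star[OF f(1)] psi0_diag_star[OF f(2)] eq by metis
  qed (metis f supp_onD)
  then show "f = f'" ..
qed

lemma psi0_in_ker_glue:
  assumes "f \<in> ker_delta0_ge1 Q BA"
  shows "psi0 Q BA e1 en f \<in> ker_delta0_ge1 QB BB"
proof -
  have f: "f \<in> supp_on VA" and bd: "\<forall>a\<in>arrs Q. \<forall>q\<in>BA. boundary Q f a q = 0"
    using assms ker_delta0_ge1_iff_boundary by auto
  have "psi0 Q BA e1 en f \<in> supp_on VB"
    using psi0_supp_on[OF f] supp_on_mono[OF glue_pair_VA_subset_VB] by blast
  moreover have "boundary Q (psi0 Q BA e1 en f \<circ> glue_pair e1 en) a q = boundary Q f a q"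
    if "q \<in> BA" for a q
    by (rule boundary_cong[OF _ basis_path_chain[OF that]]) (simp add: psi0_diag_star[OF f])
  ultimately show ?thesis
    using bd by (auto simp: ker_glue_iff)
qed

subsection \<open>Non-special paths and the kernel of delta^0 for the glued algebra\<close>

definition nsp_support :: "('v \<times> ('v, 'a) path) set" where
  "nsp_support = {(e1, st p) | p. nonspecial Q Z e1 en p}"

lemma nonspecialD:
  assumes "nonspecial Q Z e1 en p"
  shows "p \<in> BA" "snd p \<noteq> []" "fst p \<in> {e1, en}" "path_end Q p \<in> {e1, en}"
    and "fst p \<noteq> path_end Q p"
  using assms e1_ne_en by (auto simp: nonspecial_def path_end_def)

lemma diag_star_in_nsp_support_iff:
  assumes "is_chain Q p"
  shows "diag (st p) \<in> nsp_support \<longleftrightarrow> nonspecial Q Z e1 en p"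
proof
  assume "diag (st p) \<in> nsp_support"
  then obtain p' where p': "nonspecial Q Z e1 en p'" "st p = st p'"
    by (auto simp: nsp_support_def diag_def)
  then have "p' = p"
    using star_inj[OF basis_path_chain[OF nonspecialD(1)[OF p'(1)]] assms nonspecialD(2)[OF p'(1)]
        p'(2)[symmetric]] by simp
  with p' show "nonspecial Q Z e1 en p"
    by simp
next
  assume ns: "nonspecial Q Z e1 en p"
  then have "g (fst p) = e1"
    using nonspecialD(3) glue_v_e1 by blast
  then have "diag (st p) = (e1, st p)"
    by (simp add: diag_def)
  with ns show "diag (st p) \<in> nsp_support"
    unfolding nsp_support_def by blast
qed

lemma nsp_support_subset_VB: "nsp_support \<subseteq> VB"
proof
  fix x assume "x \<in> nsp_support"
  then obtain p where p: "nonspecial Q Z e1 en p" "x = (e1, st p)"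
    by (auto simp: nsp_support_def)
  note p_props = nonspecialD[OF p(1)]
  then have "g (fst p) = e1" "g (path_end Q p) = e1"
    using glue_v_e1 by auto
  then show "x \<in> VB"
    using p(2) p_props(1,2) star_basis_path e1 e1_ne_en by (simp add: VP_ge1_iff path_end_star)
qed

lemma finite_nsp_support: "finite nsp_support"
  using finite_subset[OF nsp_support_subset_VB finite_VB] .

lemma nsp_support_disjoint: "nsp_support \<inter> glue_pair e1 en ` VA = {}"
proof -
  have "glue_pair e1 en y \<notin> nsp_support" if y: "y \<in> VA" for y
  proof -
    obtain p where p: "y = diag p" "p \<in> BA" "path_end Q p = fst p"
      using VA_elem[OF y] by blast
    then have "\<not> nonspecial Q Z e1 en p"
      using nonspecialD(5) by metis
    then show ?thesis
      using diag_star_in_nsp_support_iff basis_path_chain p by simp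
  qed
  then show ?thesis
    by blast
qed

lemma nsp_support_eq_image: "nsp_support = (\<lambda>p. (e1, st p)) ` {p. nonspecial Q Z e1 en p}"
  unfolding nsp_support_def by auto

lemma card_nsp_support: "card nsp_support = nsp Q Z e1 en"
proof -
  have "inj_on (\<lambda>p. (e1, st p)) {p. nonspecial Q Z e1 en p}"
  proof (rule inj_onI)
    fix p p' assume "p \<in> {p. nonspecial Q Z e1 en p}" "p' \<in> {p. nonspecial Q Z e1 en p}"
      and "(e1, st p) = (e1, st p')"
    then show "p = p'"
      using star_inj[of Q p p' e1 en] nonspecialD(1,2) basis_path_chain by simp
  qed
  then show ?thesis
    by (simp add: nsp_support_eq_image nsp_def card_image)
qed

lemma Z_nsp_eq: "Z_nsp Q Z e1 en = (supp_on nsp_support :: (_ \<Rightarrow> 'k::field) set)"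
proof -
  have "{(\<lambda>x. if x = (e1, st p) then 1 else 0) | p. nonspecial Q Z e1 en p}
      = (unit_vec ` nsp_support :: (_ \<Rightarrow> 'k) set)"
    unfolding nsp_support_eq_image image_image unit_vec_def by auto
  then show ?thesis
    unfolding Z_nsp_def by (simp only: span_unit_vec[OF finite_nsp_support])
qed

lemma nonspecial_same_block:
  assumes "nonspecial Q Z e1 en p"
  shows "same_block Q e1 en"
proof -
  have "same_block Q (fst p) (path_end Q p)"
    using same_block_path_end[OF basis_path_chain[OF nonspecialD(1)[OF assms]]] by simp
  moreover have "(fst p = e1 \<and> path_end Q p = en) \<or> (fst p = en \<and> path_end Q p = e1)"
    using assms by (simp add: nonspecial_def)
  ultimately show ?thesis
    by (auto dest: same_block_sym)
qed

lemma nsp_eq_0_if_not_same_block: "\<not> same_block Q e1 en \<Longrightarrow> nsp Q Z e1 en = 0"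
  using nonspecial_same_block unfolding nsp_def by (metis card.empty empty_Collect_eq)

lemma nonspecial_not_truncation:
  assumes q: "q \<in> BA" "snd q \<noteq> []"
  shows "\<not> nonspecial Q Z e1 en (drop_last q)" "\<not> nonspecial Q Z e1 en (drop_first Q q)"
proof -
  have chain: "is_chain Q q" and no_rel: "\<not> contains_rel Z q"
    using q(1) basis_path_chain by (auto simp: basis_paths_def)
  have "last (snd q) \<in> arrs Q"
    using arrow_chain_arrs[OF chain] q(2) by auto
  then show "\<not> nonspecial Q Z e1 en (drop_last q)"
    using no_rel is_chain_drop_last(2)[OF chain q(2)] post_arr_drop_last[OF q(2)]
    by (auto simp: nonspecial_def)
  show "\<not> nonspecial Q Z e1 en (drop_first Q q)"
    using no_rel is_chain_drop_first(2)[OF chain q(2)] pre_arr_drop_first[OF chain q(2)]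
    by (auto simp: nonspecial_def drop_first_def)
qed

lemma supp_on_nsp_support_in_ker_glue:
  assumes z: "z \<in> supp_on nsp_support"
  shows "z \<in> ker_delta0_ge1 QB BB"
proof -
  have "boundary Q (z \<circ> glue_pair e1 en) a q = 0" if q: "q \<in> BA" for a q
  proof -
    have chain: "is_chain Q q"
      using q basis_path_chain by blast
    have "z (diag (st (drop_last q))) = 0" "z (diag (st (drop_first Q q))) = 0" if "snd q \<noteq> []"
      using supp_onD[OF z] nonspecial_not_truncation[OF q that]
        diag_star_in_nsp_support_iff[OF is_chain_drop_last(1)[OF chain that]]
        diag_star_in_nsp_support_iff[OF is_chain_drop_first(1)[OF chain that]]
      by auto
    then show ?thesis
      by (simp add: boundary_def)
  qed
  moreover have "z \<in> supp_on VB"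
    using z supp_on_mono[OF nsp_support_subset_VB] by blast
  ultimately show ?thesis
    by (simp add: ker_glue_iff)
qed

(* A special path extends by some arrow to a basis path, and the cycle condition at that
   arrow isolates the coefficient of the path. *)
lemma ker_glue_vanishes_on_special:
  assumes h: "h \<in> ker_delta0_ge1 QB BB" and q: "q \<in> BA" "fst q \<noteq> path_end Q q"
    and ends: "fst q \<in> {e1, en}" "path_end Q q \<in> {e1, en}" and special: "\<not> nonspecial Q Z e1 en q"
  shows "h (diag (st q)) = 0"
proof -
  have bd: "\<forall>a\<in>arrs Q. \<forall>p\<in>BA. boundary Q (h \<circ> glue_pair e1 en) a p = 0"
    using h ker_glue_iff by blast
  have chain: "is_chain Q q"
    using q(1) basis_path_chain by blast
  have nonempty: "snd q \<noteq> []"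
    using q(2) by (auto simp: path_end_def)
  have "(fst q = e1 \<and> path_end Q q = en) \<or> (fst q = en \<and> path_end Q q = e1)"
    using ends q(2) by auto
  with special q(1) consider
      (post) a where "a \<in> arrs Q" "src Q a = path_end Q q" "\<not> contains_rel Z (post_arr a q)"
    | (pre) b where "b \<in> arrs Q" "tgt Q b = fst q" "\<not> contains_rel Z (pre_arr Q q b)"
    by (auto simp: nonspecial_def)
  then show ?thesis
  proof cases
    case post
    have "hd (snd q) \<noteq> a"
      using is_chain_drop_first(3)[OF chain nonempty] post(2) q(2) by auto
    from boundary_post_arr[OF nonempty this, of Q "h \<circ> glue_pair e1 en"]
    have "boundary Q (h \<circ> glue_pair e1 en) a (post_arr a q) = h (diag (st q))"
      by simp
    then show ?thesis
      using bd post_arr_basis_path[OF q(1) post] post(1) by metis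
  next
    case pre
    have "last (snd q) \<noteq> b"
      using is_chain_drop_last(3)[OF chain nonempty] pre(2) q(2) by auto
    from boundary_pre_arr[OF pre(2) nonempty this, of "h \<circ> glue_pair e1 en"]
    have "boundary Q (h \<circ> glue_pair e1 en) b (pre_arr Q q b) = - h (diag (st q))"
      by simp
    then show ?thesis
      using bd pre_arr_basis_path[OF q(1) pre] pre(1) by (metis neg_equal_0_iff_equal)
  qed
qed

definition pullback :: "('v \<times> ('v, 'a) path \<Rightarrow> 'k::field) \<Rightarrow> ('v \<times> ('v, 'a) path \<Rightarrow> 'k)" where
  "pullback h = (\<lambda>y. if y \<in> VA then h (glue_pair e1 en y) else 0)"

lemma pullback_supp_on: "pullback h \<in> supp_on VA"
  by (simp add: pullback_def supp_on_def)

lemma pullback_in_ker: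
  assumes h: "h \<in> ker_delta0_ge1 QB BB"
  shows "pullback h \<in> ker_delta0_ge1 Q BA"
proof -
  have h_supp: "h \<in> supp_on VB"
    and bd: "\<forall>a\<in>arrs Q. \<forall>q\<in>BA. boundary Q (h \<circ> glue_pair e1 en) a q = 0"
    using h ker_glue_iff by auto
  have agree: "\<forall>y\<in>VP Q BA. pullback h y = (h \<circ> glue_pair e1 en) y"
  proof
    fix y assume y: "y \<in> VP Q BA"
    show "pullback h y = (h \<circ> glue_pair e1 en) y"
    proof (cases "y \<in> VA")
      case False
      with y have "snd (snd y) = []"
        by (auto simp: VP_ge1_def path_len_def Suc_le_eq)
      then have "glue_pair e1 en y \<notin> VB"
        by (auto simp: VP_ge1_iff glue_pair_def)
      with False show ?thesis
        using supp_onD[OF h_supp] by (simp add: pullback_def)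
    qed (simp add: pullback_def)
  qed
  have "boundary Q (pullback h) a q = 0" if "a \<in> arrs Q" "q \<in> BA" for a q
  proof (cases "(a, q) \<in> AP Q BA")
    case True
    then show ?thesis
      using boundary_cong_VP[OF True agree] bd that by (simp add: comp_def)
  next
    case False
    then show ?thesis
      using boundary_eq_0_if_not_AP[OF _ that(2) basis_path_chain[OF that(2)] that(1)]
        pullback_supp_on supp_on_mono[of VA "VP Q BA"] by (auto simp: VP_ge1_def)
  qed
  then show ?thesis
    using pullback_supp_on by (simp add: ker_delta0_ge1_iff_boundary)
qed

lemma ker_glue_supp_on:
  assumes h: "h \<in> ker_delta0_ge1 QB BB"
  shows "h \<in> supp_on (glue_pair e1 en ` VA \<union> nsp_support)"
proof -
  have "h x = 0" if x: "x \<notin> glue_pair e1 en ` VA" "x \<notin> nsp_support" for x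
  proof (cases "x \<in> VB")
    case False
    then show ?thesis
      using h supp_onD by (auto simp: ker_glue_iff)
  next
    case True
    then obtain q where q: "q \<in> BA" "snd q \<noteq> []" "x = diag (st q)" "g (path_end Q q) = g (fst q)"
      by (rule VB_elem)
    have "path_end Q q \<noteq> fst q"
    proof
      assume "path_end Q q = fst q"
      then have "x \<in> glue_pair e1 en ` VA"
        using q diag_in_VA_iff by (metis glue_pair_diag image_eqI)
      with x(1) show False ..
    qed
    moreover from this have "fst q \<in> {e1, en}" "path_end Q q \<in> {e1, en}"
      using glue_v_eqD[OF q(4)] by auto
    moreover have "\<not> nonspecial Q Z e1 en q"
      using x(2) q(3) diag_star_in_nsp_support_iff[OF basis_path_chain[OF q(1)]] by simp
    ultimately show ?thesis
      using ker_glue_vanishes_on_special[OF h q(1)] q(3) by simp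
  qed
  then show ?thesis
    by (auto simp: supp_on_def)
qed

lemma psi0_pullback:
  assumes "x \<in> glue_pair e1 en ` VA"
  shows "psi0 Q BA e1 en (pullback h) x = h x"
proof -
  obtain p where x: "x = diag (st p)" and p: "diag p \<in> VA"
    using assms by (metis VA_elem glue_pair_diag image_iff)
  then have "psi0 Q BA e1 en (pullback h) x = pullback h (diag p)"
    using psi0_diag_star[OF pullback_supp_on[of h] basis_path_chain[of p]] diag_in_VA_iff by simp
  also have "\<dots> = h x"
    using p x by (simp add: pullback_def)
  finally show ?thesis .
qed

lemma ker_glue_decomposition:
  assumes h: "h \<in> ker_delta0_ge1 QB BB"
  shows "h = psi0 Q BA e1 en (pullback h) + (\<lambda>x. if x \<in> nsp_support then h x else 0)"
proof
  fix x
  show "h x = (psi0 Q BA e1 en (pullback h) + (\<lambda>x. if x \<in> nsp_support then h x else 0)) x"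
  proof (cases "x \<in> glue_pair e1 en ` VA")
    case True
    then have "x \<notin> nsp_support"
      using nsp_support_disjoint by blast
    then show ?thesis
      using psi0_pullback[OF True, of h] by simp
  next
    case False
    then have "psi0 Q BA e1 en (pullback h) x = 0"
      by (rule psi0_eq_0[OF pullback_supp_on])
    moreover have "h x = 0" if "x \<notin> nsp_support"
      using supp_onD[OF ker_glue_supp_on[OF h]] False that by blast
    ultimately show ?thesis
      by auto
  qed
qed

lemma ker_glue_eq_sum:
  "ker_delta0_ge1 QB BB =
     {x + y | x y. x \<in> psi0 Q BA e1 en ` ker_delta0_ge1 Q BA \<and> y \<in> supp_on nsp_support}"
proof
  show "ker_delta0_ge1 QB BB
      \<subseteq> {x + y | x y. x \<in> psi0 Q BA e1 en ` ker_delta0_ge1 Q BA \<and> y \<in> supp_on nsp_support}"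
  proof
    fix h assume h: "h \<in> ker_delta0_ge1 QB BB"
    have "(\<lambda>x. if x \<in> nsp_support then h x else 0) \<in> supp_on nsp_support"
      by (simp add: supp_on_def)
    then show "h \<in> {x + y | x y. x \<in> psi0 Q BA e1 en ` ker_delta0_ge1 Q BA \<and> y \<in> supp_on nsp_support}"
      using ker_glue_decomposition[OF h] pullback_in_ker[OF h] by blast
  qed
  show "{x + y | x y. x \<in> psi0 Q BA e1 en ` ker_delta0_ge1 Q BA \<and> y \<in> supp_on nsp_support}
      \<subseteq> ker_delta0_ge1 QB BB"
    using psi0_in_ker_glue supp_on_nsp_support_in_ker_glue
      fun_vs.subspace_add[OF subspace_ker_delta0_ge1] by blast
qed

lemma psi0_ker_Int_supp_on_nsp_support:
  "psi0 Q BA e1 en ` ker_delta0_ge1 Q BA \<inter> supp_on nsp_support = {0}"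
proof
  have "psi0 Q BA e1 en ` ker_delta0_ge1 Q BA \<subseteq> supp_on (glue_pair e1 en ` VA)"
    using psi0_supp_on ker_delta0_ge1_iff_boundary by blast
  then show "psi0 Q BA e1 en ` ker_delta0_ge1 Q BA \<inter> supp_on nsp_support \<subseteq> {0}"
    using supp_on_disjoint[OF nsp_support_disjoint] by blast
  interpret psi: Vector_Spaces.linear fscale fscale "psi0 Q BA e1 en"
    by (rule linear_psi0)
  have "0 \<in> ker_delta0_ge1 Q BA" "psi0 Q BA e1 en 0 = 0"
    using fun_vs.subspace_0[OF subspace_ker_delta0_ge1] psi.zero by auto
  then show "{0} \<subseteq> psi0 Q BA e1 en ` ker_delta0_ge1 Q BA \<inter> supp_on nsp_support"
    by (force simp: supp_on_def)
qed

lemma dim_psi0_ker: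
  "fdim (psi0 Q BA e1 en ` (ker_delta0_ge1 Q BA :: (_ \<Rightarrow> 'k::field) set))
     = fdim (ker_delta0_ge1 Q BA :: (_ \<Rightarrow> 'k) set)"
proof -
  have "(ker_delta0_ge1 Q BA :: (_ \<Rightarrow> 'k) set) \<subseteq> supp_on VA"
    using ker_delta0_ge1_iff_boundary by blast
  then have "fun_vs.span (ker_delta0_ge1 Q BA :: (_ \<Rightarrow> 'k) set) \<subseteq> supp_on VA"
    by (rule fun_vs.span_minimal[OF _ subspace_supp_on])
  then have "inj_on (psi0 Q BA e1 en) (fun_vs.span (ker_delta0_ge1 Q BA :: (_ \<Rightarrow> 'k) set))"
    using inj_on_psi0 by (rule inj_on_subset[rotated])
  then show ?thesis
    by (rule fun_vs.dim_image_inj_on[OF linear_psi0])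
qed

lemma dim_ker_glue:
  "fdim (ker_delta0_ge1 QB BB :: (_ \<Rightarrow> 'k::field) set)
     = fdim (ker_delta0_ge1 Q BA :: (_ \<Rightarrow> 'k) set) + nsp Q Z e1 en"
proof -
  interpret psi: Vector_Spaces.linear fscale fscale "psi0 Q BA e1 en :: _ \<Rightarrow> _ \<Rightarrow> 'k"
    by (rule linear_psi0)
  have "(ker_delta0_ge1 QB BB :: (_ \<Rightarrow> 'k) set) \<subseteq> fun_vs.span (unit_vec ` VB)"
    using ker_glue_iff span_unit_vec[OF finite_VB] by blast
  then have "psi0 Q BA e1 en ` (ker_delta0_ge1 Q BA :: (_ \<Rightarrow> 'k) set)
      \<subseteq> fun_vs.span (unit_vec ` VB)"
    and "(supp_on nsp_support :: (_ \<Rightarrow> 'k) set) \<subseteq> fun_vs.span (unit_vec ` VB)"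
    using psi0_in_ker_glue supp_on_nsp_support_in_ker_glue by auto
  from fun_vs.dim_direct_sum[OF psi.subspace_image[OF subspace_ker_delta0_ge1] subspace_supp_on
      equalityD1[OF psi0_ker_Int_supp_on_nsp_support] finite_imageI[OF finite_VB] this]
  have "fdim (ker_delta0_ge1 QB BB :: (_ \<Rightarrow> 'k) set)
      = fdim (psi0 Q BA e1 en ` (ker_delta0_ge1 Q BA :: (_ \<Rightarrow> 'k) set))
        + fdim (supp_on nsp_support :: (_ \<Rightarrow> 'k) set)"
    unfolding ker_glue_eq_sum .
  then show ?thesis
    by (simp add: dim_psi0_ker dim_supp_on[OF finite_nsp_support] card_nsp_support)
qed

end

theorem lemma6p2:
  fixes Q :: "('v, 'a) quiver" and Z :: "('v, 'a) path set" and e1 en :: 'v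
  assumes "monomial_data Q Z"
    and "e1 \<in> verts Q" and "en \<in> verts Q" and "e1 \<noteq> en"
    and "non_isolated Q e1" and "non_isolated Q en"
  defines "KA \<equiv> (ker_delta0_ge1 Q (basis_paths Q Z) :: ('v \<times> ('v, 'a) path \<Rightarrow> 'k::field) set)"
    and "KB \<equiv> (ker_delta0_ge1 (glue_quiver Q e1 en)
                 (basis_paths (glue_quiver Q e1 en) (glue_rels Q Z e1 en))
               :: ('v \<times> ('v, 'a) path \<Rightarrow> 'k::field) set)"
    and "PA \<equiv> psi0 Q (basis_paths Q Z) e1 en `
                 (ker_delta0_ge1 Q (basis_paths Q Z) :: ('v \<times> ('v, 'a) path \<Rightarrow> 'k::field) set)"
    and "ZN \<equiv> (Z_nsp Q Z e1 en :: ('v \<times> ('v, 'a) path \<Rightarrow> 'k::field) set)"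
  shows "(KB = {x + y | x y. x \<in> PA \<and> y \<in> ZN} \<and> PA \<inter> ZN = {0}) \<and>
         (same_block Q e1 en \<longrightarrow> fdim KB = fdim KA + nsp Q Z e1 en) \<and>
         (\<not> same_block Q e1 en \<longrightarrow> fdim KB = fdim KA)"
proof -
  interpret gluing Q Z e1 en
    using assms(1,2,4) by unfold_locales
  have "KB = {x + y | x y. x \<in> PA \<and> y \<in> ZN}" "PA \<inter> ZN = {0}"
    unfolding KB_def PA_def ZN_def Z_nsp_eq
    by (rule ker_glue_eq_sum, rule psi0_ker_Int_supp_on_nsp_support)
  moreover have "fdim KB = fdim KA + nsp Q Z e1 en"
    unfolding KA_def KB_def by (rule dim_ker_glue)
  ultimately show ?thesis
    using nsp_eq_0_if_not_same_block by simp
qed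

end
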